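(* Let $\epsilon\ge 0$, let $\psi=\frac{1+\epsilon+\sqrt{\epsilon^2+6\epsilon+5}}{2}$ and $z=\lfloor\psi\rfloor$. For every unweighted congestion game $\mathcal{G}$ with affine latency functions, $\epsilon\text{-PoA}(\mathcal{G})\le\frac{(1+\epsilon)(z^2+3z+1)}{2z-\epsilon}$.
   Context: A weighted congestion game consists of a finite set $[n]=\{1,\dots,n\}$ of players, a finite set $E$ of resources, for each player $i$ a weight $w_i>0$ and a nonempty finite strategy set $\Sigma_i\subseteq 2^E$, and for each resource $e$ a latency function $\ell_e:\mathbb{R}_{\ge 0}\to\mathbb{R}_{\ge 0}$. It is unweighted if $w_i=1$ for all $i$. Affine latency functions means $\ell_e(x)=\alpha_e x+\beta_e$ with $\alpha_e,\beta_e\ge 0$. For a strategy profile $S=(s_1,\dots,s_n)\in\prod_i\Sigma_i$, the congestion of $e$ is $L_e(S)=\sum_{i:\,e\in s_i}w_i$, the cost of player $i$ is $c_i(S)=\sum_{e\in s_i}\ell_e(L_e(S))$, and the social cost is $\mathrm{SUM}(S)=\sum_{i\in[n]}c_i(S)$; $S^*$ denotes a profile minimizing $\mathrm{SUM}$. For $t\in\Sigma_i$, $(S_{-i}\diamond t)$ denotes the profile obtained from $S$ by replacing $s_i$ with $t$. For $\epsilon\ge 0$, $S$ is an $\epsilon$-approximate pure Nash equilibrium ($\epsilon$-PNE) if $c_i(S)\le(1+\epsilon)c_i(S_{-i}\diamond t)$ for all $i\in[n]$ and all $t\in\Sigma_i$. The $\epsilon$-approximate price of anarchy is $\epsilon\text{-PoA}(\mathcal{G})=\max_{S\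 \epsilon\text{-PNE}}\mathrm{SUM}(S)/\mathrm{SUM}(S^* )$. *)

theory Defs
  imports "HOL-Library.FuncSet" Complex_Main
begin

definition is_congestion_game ::
  "nat \<Rightarrow> 'e set \<Rightarrow> (nat \<Rightarrow> real) \<Rightarrow> (nat \<Rightarrow> 'e set set) \<Rightarrow> ('e \<Rightarrow> real \<Rightarrow> real) \<Rightarrow> bool" where
  "is_congestion_game n E w Str l \<longleftrightarrow>
     finite E \<and>
     (\<forall>i\<in>{1..n}. w i > 0 \<and> Str i \<noteq> {} \<and> finite (Str i) \<and> Str i \<subseteq> Pow E) \<and>
     (\<forall>e\<in>E. \<forall>x\<ge>0. l e x \<ge> 0)"

definition profiles :: "nat \<Rightarrow> (nat \<Rightarrow> 'e set set) \<Rightarrow> (nat \<Rightarrow> 'e set) set" where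
  "profiles n Str = (\<Pi>\<^sub>E i\<in>{1..n}. Str i)"

definition congestion :: "nat \<Rightarrow> (nat \<Rightarrow> real) \<Rightarrow> (nat \<Rightarrow> 'e set) \<Rightarrow> 'e \<Rightarrow> real" where
  "congestion n w S e = (\<Sum>i\<in>{i\<in>{1..n}. e \<in> S i}. w i)"

definition player_cost ::
  "nat \<Rightarrow> (nat \<Rightarrow> real) \<Rightarrow> ('e \<Rightarrow> real \<Rightarrow> real) \<Rightarrow> (nat \<Rightarrow> 'e set) \<Rightarrow> nat \<Rightarrow> real" where
  "player_cost n w l S i = (\<Sum>e\<in>S i. l e (congestion n w S e))"

definition social_cost ::
  "nat \<Rightarrow> (nat \<Rightarrow> real) \<Rightarrow> ('e \<Rightarrow> real \<Rightarrow> real) \<Rightarrow> (nat \<Rightarrow> 'e set) \<Rightarrow> real" where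
  "social_cost n w l S = (\<Sum>i\<in>{1..n}. player_cost n w l S i)"

text \<open>epsilon-approximate pure Nash equilibrium; S(i := t) is the profile (S_{-i} <> t).\<close>
definition is_eps_PNE ::
  "nat \<Rightarrow> (nat \<Rightarrow> real) \<Rightarrow> (nat \<Rightarrow> 'e set set) \<Rightarrow> ('e \<Rightarrow> real \<Rightarrow> real) \<Rightarrow> real \<Rightarrow> (nat \<Rightarrow> 'e set) \<Rightarrow> bool" where
  "is_eps_PNE n w Str l eps S \<longleftrightarrow>
     S \<in> profiles n Str \<and>
     (\<forall>i\<in>{1..n}. \<forall>t\<in>Str i.
        player_cost n w l S i \<le> (1 + eps) * player_cost n w l (S(i := t)) i)"

definition opt_cost ::
  "nat \<Rightarrow> (nat \<Rightarrow> real) \<Rightarrow> (nat \<Rightarrow> 'e set set) \<Rightarrow> ('e \<Rightarrow> real \<Rightarrow> real) \<Rightarrow> real" where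
  "opt_cost n w Str l = Min (social_cost n w l ` profiles n Str)"

definition eps_PoA ::
  "nat \<Rightarrow> (nat \<Rightarrow> real) \<Rightarrow> (nat \<Rightarrow> 'e set set) \<Rightarrow> ('e \<Rightarrow> real \<Rightarrow> real) \<Rightarrow> real \<Rightarrow> real" where
  "eps_PoA n w Str l eps =
     Max {social_cost n w l S / opt_cost n w Str l | S. is_eps_PNE n w Str l eps S}"

end

theory Submission
  imports Defs
begin

(* The proof is the standard smoothness argument.  For natural numbers x, y (the loads of a
   resource under an equilibrium S and an optimum T) and any natural z one has the
   arithmetic inequality  (2z+1) y (x+1) <= (z^2+3z+1) y^2 + x^2,  hence for affine
   latencies  (2z+1) y l(x+1) <= (z^2+3z+1) y l(y) + x l(x).  Summing over resources and
   using the epsilon-equilibrium condition against the deviations S(i := T i) gives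
     (2z - eps) SUM(S) <= (1+eps)(z^2+3z+1) SUM(T),
   which bounds SUM(S)/SUM(T) whenever 2z > eps.  For z = floor(psi) we have z > eps.
   Finally, Rosenthal's potential shows that an exact (hence epsilon-approximate) pure Nash
   equilibrium exists, so the maximum defining the price of anarchy ranges over a nonempty
   finite set. *)

text \<open>For y = 1 it says that the product of two consecutive integers is nonnegative; for y \<ge> 2
  it follows from a sum-of-squares decomposition.\<close>
lemma load_product_ineq:
  fixes x y z :: nat
  shows "(2 * real z + 1) * real y * (real x + 1) \<le> (real z^2 + 3 * real z + 1) * (real y)^2 + (real x)^2"
proof -
  consider "y = 0" | "y = 1" | "y \<ge> 2" by linarith
  then show ?thesis
  proof cases
    case 1
    then show ?thesis by simp
  next
    case 2
    have "(real x - real z) * (real x - real z - 1) \<ge> 0"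
      by (cases "x \<le> z") (auto intro: mult_nonpos_nonpos)
    then show ?thesis using 2 by (simp add: algebra_simps power2_eq_square)
  next
    case 3
    have sos: "4 * ((real z^2 + 3 * real z + 1) * (real y)^2 + (real x)^2
                   - (2 * real z + 1) * real y * (real x + 1))
       = (2 * real x - (2 * real z + 1) * real y)^2 + (8 * real z + 3) * real y * (real y - 2)
         + (8 * real z + 2) * real y"
      by (simp add: algebra_simps power2_eq_square)
    have "(8 * real z + 3) * real y * (real y - 2) \<ge> 0" using 3 by simp
    moreover have "(8 * real z + 2) * real y \<ge> 0" by simp
    ultimately show ?thesis using sos
      by (smt (verit) zero_le_power2)
  qed
qed

text \<open>The same inequality for an affine latency a x + b with a, b \<ge> 0: the cost y l(x+1)
  of the optimal users deviating into the equilibrium load is dominated by a combination of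
  the optimal cost y l(y) and the equilibrium cost x l(x) of the resource.\<close>
lemma affine_smoothness_ineq:
  fixes x y z :: nat and a b :: real
  assumes a: "a \<ge> 0" and b: "b \<ge> 0"
  shows "(2 * real z + 1) * (real y * (a * (real x + 1) + b))
     \<le> (real z^2 + 3 * real z + 1) * (real y * (a * real y + b)) + real x * (a * real x + b)"
proof -
  have "a * ((2 * real z + 1) * real y * (real x + 1))
      \<le> a * ((real z^2 + 3 * real z + 1) * (real y)^2 + (real x)^2)"
    using load_product_ineq a by (rule mult_left_mono)
  moreover have "(2 * real z + 1) * (real y * b) \<le> (real z^2 + 3 * real z + 1) * (real y * b)"
    using b by (intro mult_right_mono) auto
  moreover have "0 \<le> real x * b" using b by simp
  ultimately show ?thesis by (simp add: algebra_simps power2_eq_square)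
qed

text \<open>Turning a cross-multiplied bound into a bound on a ratio; a zero denominator is
  harmless because division by zero yields zero.\<close>
lemma ratio_le_of_cross_mult:
  fixes c opt k d :: real
  assumes d: "d > 0" and k: "k \<ge> 0" and opt: "opt \<ge> 0" and cross: "d * c \<le> k * opt"
  shows "c / opt \<le> k / d"
proof (cases "opt = 0")
  case True
  then show ?thesis using d k by simp
next
  case False
  then have "opt > 0" using opt by simp
  with d cross show ?thesis by (simp add: divide_le_eq le_divide_eq mult.commute)
qed

text \<open>The integer part of psi exceeds eps, since psi > 1 + eps.\<close>
lemma floor_psi_gt_eps:
  fixes eps :: real
  assumes eps: "eps \<ge> 0"
  shows "eps < real_of_int \<lfloor>(1 + eps + sqrt (eps^2 + 6 * eps + 5)) / 2\<rfloor>"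
proof -
  have "eps + 1 < sqrt (eps^2 + 6 * eps + 5)"
    using eps by (intro real_less_rsqrt) (simp add: power2_eq_square algebra_simps)
  then have "1 + eps \<le> (1 + eps + sqrt (eps^2 + 6 * eps + 5)) / 2" by simp
  then have "\<lfloor>1 + eps\<rfloor> \<le> \<lfloor>(1 + eps + sqrt (eps^2 + 6 * eps + 5)) / 2\<rfloor>" by (rule floor_mono)
  moreover have "eps < real_of_int \<lfloor>eps\<rfloor> + 1" by (rule real_of_int_floor_add_one_gt)
  ultimately show ?thesis by linarith
qed

text \<open>One more user on a resource with latency a x + b raises its Rosenthal term
  a x (x+1)/2 + b x by exactly the latency that user experiences.\<close>
lemma rosenthal_increment:
  fixes a b r :: real
  shows "a * (r + 1) * (r + 1 + 1) / 2 + b * (r + 1) = a * r * (r + 1) / 2 + b * r + (a * (r + 1) + b)"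
  by (simp add: field_simps)

locale unweighted_affine_game =
  fixes n :: nat and E :: "'e set" and w :: "nat \<Rightarrow> real"
    and Str :: "nat \<Rightarrow> 'e set set" and l :: "'e \<Rightarrow> real \<Rightarrow> real"
    and \<alpha> \<beta> :: "'e \<Rightarrow> real"
  assumes game: "is_congestion_game n E w Str l"
    and unweighted: "\<forall>i\<in>{1..n}. w i = 1"
    and affine: "\<forall>e\<in>E. \<alpha> e \<ge> 0 \<and> \<beta> e \<ge> 0 \<and> (\<forall>x\<ge>0. l e x = \<alpha> e * x + \<beta> e)"
begin

lemma latency_eq: "e \<in> E \<Longrightarrow> x \<ge> 0 \<Longrightarrow> l e x = \<alpha> e * x + \<beta> e"
  and slope_nonneg: "e \<in> E \<Longrightarrow> \<alpha> e \<ge> 0"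
  and offset_nonneg: "e \<in> E \<Longrightarrow> \<beta> e \<ge> 0"
  using affine by auto

lemma finite_resources: "finite E"
  using game unfolding is_congestion_game_def by auto

lemma strategy_subset:
  assumes S: "S \<in> profiles n Str" and i: "i \<in> {1..n}"
  shows "S i \<subseteq> E"
proof -
  have "S i \<in> Str i" using S i unfolding profiles_def by (simp add: PiE_iff)
  moreover have "Str i \<subseteq> Pow E" using game i unfolding is_congestion_game_def by blast
  ultimately show ?thesis by blast
qed

lemma profile_update:
  "S \<in> profiles n Str \<Longrightarrow> i \<in> {1..n} \<Longrightarrow> t \<in> Str i \<Longrightarrow> S(i := t) \<in> profiles n Str"
  unfolding profiles_def using PiE_fun_upd[of t Str i S "{1..n}"] by (simp add: insert_absorb)

lemma finite_profiles: "finite (profiles n Str)"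
  using game unfolding profiles_def is_congestion_game_def by (auto intro!: finite_PiE)

lemma profiles_nonempty: "profiles n Str \<noteq> {}"
  using game unfolding profiles_def is_congestion_game_def by (auto simp: PiE_eq_empty_iff)

definition load :: "(nat \<Rightarrow> 'e set) \<Rightarrow> 'e \<Rightarrow> real" where
  "load S e = (\<Sum>j\<in>{1..n}. if e \<in> S j then 1 else 0)"

lemma congestion_eq_load: "congestion n w S e = load S e"
proof -
  have "congestion n w S e = (\<Sum>j\<in>{1..n}. if e \<in> S j then w j else 0)"
    unfolding congestion_def by (rule sum.inter_filter) simp
  also have "\<dots> = load S e" unfolding load_def using unweighted by (intro sum.cong) auto
  finally show ?thesis .
qed

lemma load_is_nat: "\<exists>k. load S e = real k"
  unfolding load_def by (simp add: sum.inter_filter[symmetric])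

lemma load_nonneg: "load S e \<ge> 0"
  by (simp add: load_def sum_nonneg)

lemma load_update:
  assumes i: "i \<in> {1..n}"
  shows "load (S(i := t)) e = load (S(i := {})) e + (if e \<in> t then 1 else 0)"
proof -
  have "load (S(i := u)) e = (if e \<in> u then 1 else 0) + (\<Sum>j\<in>{1..n}-{i}. if e \<in> S j then 1 else 0)"
    for u
    unfolding load_def using i by (subst sum.remove[of _ i]) (auto intro!: sum.cong)
  from this[of t] this[of "{}"] show ?thesis by simp
qed

lemma sum_players_resources:
  assumes "\<And>i. i \<in> {1..n} \<Longrightarrow> T i \<subseteq> E"
  shows "(\<Sum>i\<in>{1..n}. \<Sum>e\<in>T i. f e) = (\<Sum>e\<in>E. load T e * f e)"
proof -
  have "(\<Sum>i\<in>{1..n}. \<Sum>e\<in>T i. f e) = (\<Sum>i\<in>{1..n}. \<Sum>e\<in>E. if e \<in> T i then f e else 0)"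
  proof (rule sum.cong[OF refl])
    fix i assume "i \<in> {1..n}"
    then have "{e\<in>E. e \<in> T i} = T i" using assms by auto
    then show "(\<Sum>e\<in>T i. f e) = (\<Sum>e\<in>E. if e \<in> T i then f e else 0)"
      using finite_resources by (simp add: sum.inter_filter[symmetric])
  qed
  also have "\<dots> = (\<Sum>e\<in>E. \<Sum>i\<in>{1..n}. if e \<in> T i then f e else 0)"
    by (rule sum.swap)
  also have "\<dots> = (\<Sum>e\<in>E. load T e * f e)"
    unfolding load_def sum_distrib_right by (intro sum.cong refl) simp
  finally show ?thesis .
qed

lemma social_cost_eq:
  assumes S: "S \<in> profiles n Str"
  shows "social_cost n w l S = (\<Sum>e\<in>E. load S e * (\<alpha> e * load S e + \<beta> e))"
proof -
  have "social_cost n w l S = (\<Sum>i\<in>{1..n}. \<Sum>e\<in>S i. l e (load S e))"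
    unfolding social_cost_def player_cost_def congestion_eq_load ..
  also have "\<dots> = (\<Sum>e\<in>E. load S e * l e (load S e))"
    using strategy_subset[OF S] by (rule sum_players_resources)
  also have "\<dots> = (\<Sum>e\<in>E. load S e * (\<alpha> e * load S e + \<beta> e))"
    using latency_eq load_nonneg by (intro sum.cong) auto
  finally show ?thesis .
qed

lemma player_cost_nonneg:
  "S \<in> profiles n Str \<Longrightarrow> i \<in> {1..n} \<Longrightarrow> player_cost n w l S i \<ge> 0"
  unfolding player_cost_def congestion_eq_load
  using strategy_subset slope_nonneg offset_nonneg load_nonneg latency_eq
  by (intro sum_nonneg) (metis add_nonneg_nonneg mult_nonneg_nonneg subsetD)

lemma social_cost_nonneg: "S \<in> profiles n Str \<Longrightarrow> social_cost n w l S \<ge> 0"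
  unfolding social_cost_def using player_cost_nonneg by (intro sum_nonneg) auto

lemma optimum_attained:
  obtains T where "T \<in> profiles n Str" and "social_cost n w l T = opt_cost n w Str l"
proof -
  have "finite (social_cost n w l ` profiles n Str)" "social_cost n w l ` profiles n Str \<noteq> {}"
    using finite_profiles profiles_nonempty by auto
  from Min_in[OF this] show ?thesis using that unfolding opt_cost_def by auto
qed

text \<open>Rosenthal's potential: the sum over resources of the latencies of the first, second,
  ..., last user, i.e. a x (x+1)/2 + b x at load x.\<close>
definition potential :: "(nat \<Rightarrow> 'e set) \<Rightarrow> real" where
  "potential S = (\<Sum>e\<in>E. \<alpha> e * load S e * (load S e + 1) / 2 + \<beta> e * load S e)"

lemma potential_split:
  fixes S :: "nat \<Rightarrow> 'e set"
  assumes i: "i \<in> {1..n}" and t: "t \<subseteq> E"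
  defines "R \<equiv> load (S(i := {}))"
  shows "potential (S(i := t))
    = (\<Sum>e\<in>E. \<alpha> e * R e * (R e + 1) / 2 + \<beta> e * R e) + player_cost n w l (S(i := t)) i"
proof -
  have "player_cost n w l (S(i := t)) i = (\<Sum>e\<in>t. \<alpha> e * (R e + 1) + \<beta> e)"
    unfolding player_cost_def congestion_eq_load R_def using t load_nonneg
    by (intro sum.cong) (auto simp: load_update[OF i, of S t] latency_eq)
  also have "\<dots> = (\<Sum>e\<in>E. if e \<in> t then \<alpha> e * (R e + 1) + \<beta> e else 0)"
  proof -
    have "{e\<in>E. e \<in> t} = t" using t by auto
    then show ?thesis using finite_resources by (simp add: sum.inter_filter[symmetric])
  qed
  finally have cost: "player_cost n w l (S(i := t)) i = \<dots>" .
  have "potential (S(i := t)) = (\<Sum>e\<in>E. (\<alpha> e * R e * (R e + 1) / 2 + \<beta> e * R e)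
          + (if e \<in> t then \<alpha> e * (R e + 1) + \<beta> e else 0))"
    unfolding potential_def
  proof (rule sum.cong[OF refl])
    fix e
    show "\<alpha> e * load (S(i := t)) e * (load (S(i := t)) e + 1) / 2 + \<beta> e * load (S(i := t)) e
        = \<alpha> e * R e * (R e + 1) / 2 + \<beta> e * R e + (if e \<in> t then \<alpha> e * (R e + 1) + \<beta> e else 0)"
      unfolding R_def load_update[OF i, of S t e] by (cases "e \<in> t") (simp_all only: if_True if_False rosenthal_increment add_0_right)
  qed
  then show ?thesis by (simp add: cost sum.distrib)
qed

lemma potential_exact:
  assumes S: "S \<in> profiles n Str" and i: "i \<in> {1..n}" and t: "t \<in> Str i"
  shows "potential (S(i := t)) - potential S = player_cost n w l (S(i := t)) i - player_cost n w l S i"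
  using potential_split[OF i strategy_subset[OF profile_update[OF S i t] i], of S]
    potential_split[OF i strategy_subset[OF S i], of S]
  by simp

text \<open>A minimiser of the potential is an exact, hence epsilon-approximate, pure Nash
  equilibrium.\<close>
lemma eps_PNE_exists:
  assumes eps: "eps \<ge> 0"
  shows "\<exists>S. is_eps_PNE n w Str l eps S"
proof -
  let ?P = "profiles n Str"
  have fin: "finite (potential ` ?P)" and ne: "potential ` ?P \<noteq> {}"
    using finite_profiles profiles_nonempty by auto
  obtain S where S: "S \<in> ?P" and min: "potential S = Min (potential ` ?P)"
    using Min_in[OF fin ne] by auto
  have "player_cost n w l S i \<le> (1 + eps) * player_cost n w l (S(i := t)) i"
    if i: "i \<in> {1..n}" and t: "t \<in> Str i" for i t
  proof -
    have "potential S \<le> potential (S(i := t))"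
      using min Min_le[OF fin] profile_update[OF S i t] by simp
    then have "player_cost n w l S i \<le> player_cost n w l (S(i := t)) i"
      using potential_exact[OF S i t] by simp
    moreover have "eps * player_cost n w l (S(i := t)) i \<ge> 0"
      using eps player_cost_nonneg[OF profile_update[OF S i t] i] by simp
    ultimately show ?thesis by (simp add: distrib_right)
  qed
  then show ?thesis using S unfolding is_eps_PNE_def by blast
qed

lemma deviation_cost_bound:
  assumes S: "S \<in> profiles n Str" and T: "T \<in> profiles n Str"
  shows "(\<Sum>i\<in>{1..n}. player_cost n w l (S(i := T i)) i)
     \<le> (\<Sum>e\<in>E. load T e * (\<alpha> e * (load S e + 1) + \<beta> e))"
proof -
  have "player_cost n w l (S(i := T i)) i \<le> (\<Sum>e\<in>T i. \<alpha> e * (load S e + 1) + \<beta> e)"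
    if i: "i \<in> {1..n}" for i
    unfolding player_cost_def congestion_eq_load fun_upd_same
  proof (rule sum_mono)
    fix e assume eT: "e \<in> T i"
    have eE: "e \<in> E" using strategy_subset[OF T i] eT by auto
    have "load (S(i := {})) e \<le> load S e"
      using load_update[OF i, of S "S i" e] by simp
    then have "load (S(i := T i)) e \<le> load S e + 1"
      using load_update[OF i, of S "T i" e] eT by simp
    then show "l e (load (S(i := T i)) e) \<le> \<alpha> e * (load S e + 1) + \<beta> e"
      using latency_eq[OF eE load_nonneg] slope_nonneg[OF eE] by (simp add: mult_left_mono)
  qed
  then have "(\<Sum>i\<in>{1..n}. player_cost n w l (S(i := T i)) i)
      \<le> (\<Sum>i\<in>{1..n}. \<Sum>e\<in>T i. \<alpha> e * (load S e + 1) + \<beta> e)"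
    by (rule sum_mono)
  also have "\<dots> = (\<Sum>e\<in>E. load T e * (\<alpha> e * (load S e + 1) + \<beta> e))"
    using strategy_subset[OF T] by (rule sum_players_resources)
  finally show ?thesis .
qed

lemma smoothness:
  assumes S: "S \<in> profiles n Str" and T: "T \<in> profiles n Str"
  shows "(2 * real z + 1) * (\<Sum>e\<in>E. load T e * (\<alpha> e * (load S e + 1) + \<beta> e))
     \<le> (real z^2 + 3 * real z + 1) * social_cost n w l T + social_cost n w l S"
proof -
  have "(2 * real z + 1) * (load T e * (\<alpha> e * (load S e + 1) + \<beta> e))
      \<le> (real z^2 + 3 * real z + 1) * (load T e * (\<alpha> e * load T e + \<beta> e))
        + load S e * (\<alpha> e * load S e + \<beta> e)" if "e \<in> E" for e
  proof -
    obtain x y where "load S e = real x" "load T e = real y" using load_is_nat by metis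
    then show ?thesis
      using affine_smoothness_ineq[OF slope_nonneg[OF that] offset_nonneg[OF that]] by simp
  qed
  then show ?thesis
    unfolding social_cost_eq[OF S] social_cost_eq[OF T] sum_distrib_left sum.distrib[symmetric]
    by (rule sum_mono)
qed

lemma eps_PNE_cost_bound:
  assumes P: "is_eps_PNE n w Str l eps S" and eps: "eps \<ge> 0" and T: "T \<in> profiles n Str"
  shows "(2 * real z - eps) * social_cost n w l S
     \<le> (1 + eps) * (real z^2 + 3 * real z + 1) * social_cost n w l T"
proof -
  have S: "S \<in> profiles n Str" using P unfolding is_eps_PNE_def by auto
  define D where "D = (\<Sum>e\<in>E. load T e * (\<alpha> e * (load S e + 1) + \<beta> e))"
  have "social_cost n w l S \<le> (1 + eps) * (\<Sum>i\<in>{1..n}. player_cost n w l (S(i := T i)) i)"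
    unfolding social_cost_def sum_distrib_left
  proof (rule sum_mono)
    fix i assume i: "i \<in> {1..n}"
    then have "T i \<in> Str i" using T unfolding profiles_def by auto
    with P i show "player_cost n w l S i \<le> (1 + eps) * player_cost n w l (S(i := T i)) i"
      unfolding is_eps_PNE_def by blast
  qed
  also have "\<dots> \<le> (1 + eps) * D"
    unfolding D_def using deviation_cost_bound[OF S T] eps by (intro mult_left_mono) auto
  finally have "(2 * real z + 1) * social_cost n w l S \<le> (1 + eps) * ((2 * real z + 1) * D)"
    by (simp add: mult_left_mono mult.left_commute)
  also have "\<dots> \<le> (1 + eps) * ((real z^2 + 3 * real z + 1) * social_cost n w l T + social_cost n w l S)"
    unfolding D_def using smoothness[OF S T] eps by (intro mult_left_mono) auto
  finally show ?thesis by (simp add: algebra_simps)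
qed

lemma eps_PoA_bound:
  assumes eps: "eps \<ge> 0" and z: "2 * real z > eps"
  shows "eps_PoA n w Str l eps \<le> (1 + eps) * (real z^2 + 3 * real z + 1) / (2 * real z - eps)"
proof -
  obtain T where T: "T \<in> profiles n Str" and opt: "social_cost n w l T = opt_cost n w Str l"
    by (rule optimum_attained)
  let ?A = "{social_cost n w l S / opt_cost n w Str l | S. is_eps_PNE n w Str l eps S}"
  have "?A = (\<lambda>S. social_cost n w l S / opt_cost n w Str l) ` {S. is_eps_PNE n w Str l eps S}"
    by auto
  moreover have "{S. is_eps_PNE n w Str l eps S} \<subseteq> profiles n Str"
    unfolding is_eps_PNE_def by auto
  ultimately have "finite ?A" by (metis finite_imageI finite_subset finite_profiles)
  moreover have "?A \<noteq> {}" using eps_PNE_exists[OF eps] by auto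
  moreover have "a \<le> (1 + eps) * (real z^2 + 3 * real z + 1) / (2 * real z - eps)" if "a \<in> ?A" for a
    using that z eps eps_PNE_cost_bound[OF _ eps T] social_cost_nonneg[OF T]
    by (auto simp: opt intro!: ratio_le_of_cross_mult)
  ultimately show ?thesis unfolding eps_PoA_def by (rule Max.boundedI)
qed

end

theorem mainTheorem2:
  fixes n :: nat and E :: "'e set" and w :: "nat \<Rightarrow> real"
    and Str :: "nat \<Rightarrow> 'e set set" and l :: "'e \<Rightarrow> real \<Rightarrow> real"
    and \<alpha> \<beta> :: "'e \<Rightarrow> real" and eps :: real
  assumes game: "is_congestion_game n E w Str l"
    and unweighted: "\<forall>i\<in>{1..n}. w i = 1"
    and affine: "\<forall>e\<in>E. \<alpha> e \<ge> 0 \<and> \<beta> e \<ge> 0 \<and> (\<forall>x\<ge>0. l e x = \<alpha> e * x + \<beta> e)"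
    and eps: "eps \<ge> 0"
  shows "let \<psi> = (1 + eps + sqrt (eps^2 + 6 * eps + 5)) / 2;
             z = real_of_int \<lfloor>\<psi>\<rfloor>
         in eps_PoA n w Str l eps \<le> (1 + eps) * (z^2 + 3 * z + 1) / (2 * z - eps)"
proof -
  interpret unweighted_affine_game n E w Str l \<alpha> \<beta>
    using game unweighted affine by unfold_locales
  define \<psi> where "\<psi> = (1 + eps + sqrt (eps^2 + 6 * eps + 5)) / 2"
  have gt: "eps < real_of_int \<lfloor>\<psi>\<rfloor>" unfolding \<psi>_def using floor_psi_gt_eps[OF eps] .
  then have "real_of_int \<lfloor>\<psi>\<rfloor> = real (nat \<lfloor>\<psi>\<rfloor>)" using eps by simp
  moreover have "2 * real (nat \<lfloor>\<psi>\<rfloor>) > eps" using gt eps calculation by linarith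
  ultimately show ?thesis
    using eps_PoA_bound[OF eps] unfolding Let_def \<psi>_def[symmetric] by simp
qed

end
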